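(* Let $n=p_1^{\alpha_1}\cdots p_r^{\alpha_r}$ be the canonical factorization of $n$ into distinct primes and let $d=p_1^{\beta_1}\cdots p_r^{\beta_r}$ be a square-free divisor of $n$ ($0\le\beta_\ell\le1$ for all $\ell$). Then for every $z\in\mathbb{C}$, $$\sum_{k\mid n}\frac{1}{|c_d(k)|^z}=\prod_{\ell=1}^r\Big(1+\frac{\alpha_\ell}{(p_\ell-1)^{\beta_\ell z}}\Big).$$
   Context: For integers $m\ge1$ and $x$, $c_m(x)=\sum_{1\le j\le m,\ (j,m)=1}e^{2\pi ijx/m}$ is the Ramanujan sum (for square-free $d$ it is a nonzero integer at every divisor $k$ of $n$); for a positive real $a$, $a^z=e^{z\log a}$ with the real logarithm; the sum is over positive divisors $k$ of $n$. *)

theory Defs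
  imports "HOL-Analysis.Analysis" "HOL-Computational_Algebra.Computational_Algebra"
begin

definition ramanujan_sum :: "nat \<Rightarrow> int \<Rightarrow> complex" where
  "ramanujan_sum m x =
     (\<Sum>j\<in>{j\<in>{1..m}. coprime j m}. exp (2 * of_real pi * \<i> * of_int (int j * x) / of_nat m))"

end

theory Submission
  imports Defs "HOL-Number_Theory.Number_Theory"
begin

text \<open>Ramanujan sums are multiplicative in the modulus, and for a prime p one has
  c_p(k) = p - 1 if p divides k and c_p(k) = -1 otherwise (the primitive p-th roots of unity
  sum to -1). Hence for square-free d the modulus |c_d(k)| is the product of p - 1 over the
  primes p dividing both d and k. A divisor k of n is determined by its exponents
  0 \<le> a_p \<le> \<alpha>_p, and the summand 1/|c_d(k)|^z factors over the primes into terms that are 1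
  when a_p = 0 and (p - 1)^(-\<beta>_p z) otherwise, so summing over each a_p separately gives
  the factors 1 + \<alpha>_p / (p - 1)^(\<beta>_p z).\<close>

definition unity_root :: "nat \<Rightarrow> int \<Rightarrow> complex" where
  "unity_root m u = exp (2 * of_real pi * \<i> * of_int u / of_nat m)"

lemma unity_root_cong:
  assumes "m > 0" "[u = v] (mod int m)"
  shows "unity_root m u = unity_root m v"
proof -
  from assms(2) obtain k where k: "u = v + int m * k"
    by (metis cong_iff_lin cong_sym)
  have "2 * of_real pi * \<i> * of_int u / of_nat m
      = 2 * of_real pi * \<i> * of_int v / of_nat m + \<i> * (of_int k * (of_real pi * 2))"
    using assms(1) by (simp add: k field_simps)
  then show ?thesis
    unfolding unity_root_def by simp
qed

lemma unity_root_mult: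
  assumes "a > 0" "b > 0"
  shows "unity_root a u * unity_root b v = unity_root (a * b) (u * int b + v * int a)"
proof -
  have "2 * of_real pi * \<i> * of_int u / of_nat a + 2 * of_real pi * \<i> * of_int v / of_nat b
      = 2 * of_real pi * \<i> * of_int (u * int b + v * int a) / (of_nat (a * b) :: complex)"
    using assms by (simp add: field_simps)
  then show ?thesis
    unfolding unity_root_def by (simp add: exp_add [symmetric])
qed

lemma unity_root_power: "unity_root m (int j * u) = unity_root m u ^ j"
proof -
  have "unity_root m (int j * u) = exp (of_nat j * (2 * of_real pi * \<i> * of_int u / of_nat m))"
    unfolding unity_root_def by (simp add: algebra_simps)
  also have "\<dots> = unity_root m u ^ j"
    unfolding unity_root_def by (rule exp_of_nat_mult)
  finally show ?thesis .
qed

lemma unity_root_eq_1_imp_dvd: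
  assumes "m > 0" "unity_root m u = 1"
  shows "int m dvd u"
proof -
  from assms(2) obtain k
    where "Im (2 * of_real pi * \<i> * of_int u / of_nat m) = real_of_int (2 * k) * pi"
    unfolding unity_root_def exp_eq_1 by blast
  then have "real_of_int u = real_of_int k * real m"
    using assms(1) pi_gt_zero by (simp add: field_simps)
  then have "u = k * int m"
    by (metis of_int_eq_iff of_int_mult of_int_of_nat_eq)
  then show ?thesis
    by simp
qed

definition reduced_residues :: "nat \<Rightarrow> nat set" where
  "reduced_residues m = {j. j < m \<and> coprime j m}"

lemma finite_reduced_residues [simp]: "finite (reduced_residues m)"
  by (simp add: reduced_residues_def)

lemma bij_betw_mod_reduced_residues:
  assumes "m > 0"
  shows "bij_betw (\<lambda>j. j mod m) {j\<in>{1..m}. coprime j m} (reduced_residues m)"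
proof (rule bij_betw_byWitness [where f' = "\<lambda>j. if j = 0 then m else j"])
  show "\<forall>j\<in>{j\<in>{1..m}. coprime j m}. (if j mod m = 0 then m else j mod m) = j"
    by (auto simp: le_less)
  show "\<forall>j\<in>reduced_residues m. (if j = 0 then m else j) mod m = j"
    by (auto simp: reduced_residues_def)
qed (use assms in \<open>auto simp: reduced_residues_def\<close>)

lemma card_reduced_residues:
  assumes "m > 0"
  shows "card (reduced_residues m) = totient m"
  using bij_betw_same_card [OF bij_betw_mod_reduced_residues [OF assms]]
  by (simp add: totient_def totatives_def atLeastAtMost_iff greaterThanAtMost_iff Suc_le_eq)

lemma ramanujan_sum_reduced_residues:
  assumes "m > 0"
  shows "ramanujan_sum m x = (\<Sum>j\<in>reduced_residues m. unity_root m (int j * x))"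
proof -
  have "ramanujan_sum m x = (\<Sum>j\<in>{j\<in>{1..m}. coprime j m}. unity_root m (int (j mod m) * x))"
    unfolding ramanujan_sum_def unity_root_def [symmetric]
  proof (rule sum.cong [OF refl])
    fix j
    show "unity_root m (int j * x) = unity_root m (int (j mod m) * x)"
      by (rule unity_root_cong [OF assms]) (simp add: cong_def zmod_int mod_mult_left_eq)
  qed
  also have "\<dots> = (\<Sum>j\<in>reduced_residues m. unity_root m (int j * x))"
    using sum.reindex_bij_betw [OF bij_betw_mod_reduced_residues [OF assms]] by simp
  finally show ?thesis .
qed

lemma coprime_linear_combination_iff:
  fixes a b i j :: nat
  assumes "coprime a b" "a > 0"
  shows "coprime (i * b + j * a) a \<longleftrightarrow> coprime i a"
proof -
  have "coprime (i * b + j * a) a \<longleftrightarrow> coprime ((i * b + j * a) mod a) a"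
    using assms(2) by (simp only: coprime_mod_left_iff neq0_conv)
  also have "(i * b + j * a) mod a = (i * b) mod a"
    by simp
  also have "coprime ((i * b) mod a) a \<longleftrightarrow> coprime i a"
    using assms by (simp add: coprime_mod_left_iff coprime_commute)
  finally show ?thesis .
qed

lemma inj_on_reduced_residues_mult:
  assumes "coprime a b"
  shows "inj_on (\<lambda>(i, j). (i * b + j * a) mod (a * b)) (reduced_residues a \<times> reduced_residues b)"
proof -
  have "i = i' \<and> j = j'"
    if in_A: "i < a" "j < b" "i' < a" "j' < b"
      and eq: "(i * b + j * a) mod (a * b) = (i' * b + j' * a) mod (a * b)" for i j i' j'
  proof -
    from eq have cong: "[i * b + j * a = i' * b + j' * a] (mod a * b)"
      by (simp add: cong_def)
    from cong_modulus_mult_nat [OF cong] have "[i * b = i' * b] (mod a)"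
      by (simp add: cong_def)
    with assms have "[i = i'] (mod a)"
      by (simp add: cong_mult_rcancel_nat coprime_commute)
    moreover from cong_modulus_mult_nat [OF cong [unfolded mult.commute [of a b]]]
    have "[j * a = j' * a] (mod b)"
      by (simp add: cong_def)
    with assms have "[j = j'] (mod b)"
      by (simp add: cong_mult_rcancel_nat)
    ultimately show ?thesis
      using in_A by (auto intro: cong_less_imp_eq_nat)
  qed
  then show ?thesis
    by (auto simp: inj_on_def reduced_residues_def)
qed

lemma bij_betw_reduced_residues_mult:
  assumes "coprime a b" "a > 0" "b > 0"
  shows "bij_betw (\<lambda>(i, j). (i * b + j * a) mod (a * b))
           (reduced_residues a \<times> reduced_residues b) (reduced_residues (a * b))"
    (is "bij_betw ?h ?A ?B")
proof -
  note inj = inj_on_reduced_residues_mult [OF assms(1)]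
  have sub: "?h ` ?A \<subseteq> ?B"
  proof
    fix y
    assume "y \<in> ?h ` ?A"
    then obtain i j where ij: "(i, j) \<in> ?A" and y: "y = (i * b + j * a) mod (a * b)"
      by auto
    from ij have "coprime (i * b + j * a) a" "coprime (j * a + i * b) b"
      using coprime_linear_combination_iff [OF assms(1,2)]
        coprime_linear_combination_iff [OF assms(1) [unfolded coprime_commute [of a b]] assms(3)]
      by (simp_all add: reduced_residues_def)
    then have "coprime (i * b + j * a) (a * b)"
      by (simp add: add.commute)
    then have "coprime ((i * b + j * a) mod (a * b)) (a * b)"
      using assms by (subst coprime_mod_left_iff) auto
    then show "y \<in> ?B"
      using assms by (simp add: reduced_residues_def y)
  qed
  have "card (?h ` ?A) = card ?B"
    using assms by (simp add: card_image [OF inj] card_cartesian_product card_reduced_residues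
        totient_mult_coprime)
  with sub have "?h ` ?A = ?B"
    by (intro card_subset_eq) auto
  with inj show ?thesis
    by (simp add: bij_betw_def)
qed

lemma ramanujan_sum_mult_coprime:
  assumes "coprime a b" "a > 0" "b > 0"
  shows "ramanujan_sum (a * b) x = ramanujan_sum a x * ramanujan_sum b x"
proof -
  have "ramanujan_sum a x * ramanujan_sum b x
      = (\<Sum>(i, j)\<in>reduced_residues a \<times> reduced_residues b.
           unity_root (a * b) (int ((i * b + j * a) mod (a * b)) * x))"
    unfolding ramanujan_sum_reduced_residues [OF assms(2)] ramanujan_sum_reduced_residues [OF assms(3)]
      sum_product sum.cartesian_product
  proof (rule sum.cong [OF refl], clarify)
    fix i j
    have "unity_root a (int i * x) * unity_root b (int j * x)
        = unity_root (a * b) (int i * x * int b + int j * x * int a)"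
      by (rule unity_root_mult [OF assms(2,3)])
    also have "\<dots> = unity_root (a * b) (int ((i * b + j * a) mod (a * b)) * x)"
    proof (rule unity_root_cong)
      have "int ((i * b + j * a) mod (a * b)) * x mod int (a * b)
          = ((int i * int b + int j * int a) * x) mod int (a * b)"
        by (simp add: zmod_int mod_mult_left_eq)
      then show "[int i * x * int b + int j * x * int a
          = int ((i * b + j * a) mod (a * b)) * x] (mod int (a * b))"
        by (simp add: cong_def algebra_simps)
    qed (use assms in simp)
    finally show "unity_root a (int i * x) * unity_root b (int j * x)
        = unity_root (a * b) (int ((i * b + j * a) mod (a * b)) * x)" .
  qed
  also have "\<dots> = ramanujan_sum (a * b) x"
    using sum.reindex_bij_betw [OF bij_betw_reduced_residues_mult [OF assms],
        of "\<lambda>k. unity_root (a * b) (int k * x)"] assms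
    by (simp add: ramanujan_sum_reduced_residues case_prod_unfold)
  finally show ?thesis
    by simp
qed

lemma ramanujan_sum_prime:
  assumes "prime p"
  shows "ramanujan_sum p x = (if int p dvd x then of_nat (p - 1) else -1)"
proof -
  have p0: "p > 0"
    using assms prime_gt_0_nat by blast
  have residues: "reduced_residues p = {..<p} - {0}"
    using assms by (auto simp: reduced_residues_def prime_nat_iff'' coprime_commute [of _ p]
        intro: prime_imp_coprime_nat)
  show ?thesis
  proof (cases "int p dvd x")
    case True
    then have "unity_root p (int j * x) = 1" for j
      using unity_root_cong [OF p0, of "int j * x" 0] by (simp add: cong_def unity_root_def)
    then show ?thesis
      using True p0 by (simp add: ramanujan_sum_reduced_residues residues)
  next
    case False
    define w where "w = unity_root p x"
    have "w \<noteq> 1"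
      using unity_root_eq_1_imp_dvd [OF p0] False by (auto simp: w_def)
    moreover have "w ^ p = 1"
    proof -
      have "w ^ p = unity_root p (int p * x)"
        by (simp add: w_def unity_root_power)
      also have "\<dots> = unity_root p 0"
        by (rule unity_root_cong [OF p0]) (simp add: cong_def)
      finally show ?thesis
        by (simp add: unity_root_def)
    qed
    ultimately have "(\<Sum>j<p. w ^ j) = 0"
      using geometric_sum [of w p] by simp
    moreover have "(\<Sum>j<p. w ^ j) = 1 + (\<Sum>j\<in>reduced_residues p. w ^ j)"
      unfolding residues using p0 by (subst sum.remove [of _ 0]) auto
    ultimately have "(\<Sum>j\<in>reduced_residues p. w ^ j) = -1"
      by (simp add: add_eq_0_iff)
    then show ?thesis
      using False by (simp add: ramanujan_sum_reduced_residues [OF p0] unity_root_power w_def)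
  qed
qed

lemma ramanujan_sum_prod_primes:
  assumes "finite S" "\<And>p. p \<in> S \<Longrightarrow> prime p"
  shows "ramanujan_sum (\<Prod>S) x = (\<Prod>p\<in>S. ramanujan_sum p x)"
  using assms
proof (induction S rule: finite_induct)
  case empty
  show ?case
    by (simp add: ramanujan_sum_reduced_residues unity_root_def reduced_residues_def)
next
  case (insert p S)
  have "coprime p (\<Prod>S)"
    using insert by (intro prod_coprime_right primes_coprime) auto
  moreover have "\<Prod>S > 0" "p > 0"
    using insert by (auto intro: prod_pos prime_gt_0_nat)
  ultimately show ?case
    using insert by (simp add: ramanujan_sum_mult_coprime)
qed

lemma norm_ramanujan_sum_squarefree:
  assumes "squarefree d" "d > 0"
  shows "norm (ramanujan_sum d x) = (\<Prod>p\<in>prime_factors d. if int p dvd x then real (p - 1) else 1)"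
proof -
  have "d = (\<Prod>p\<in>prime_factors d. p ^ multiplicity p d)"
    using prime_factorization_nat assms(2) by blast
  also have "\<dots> = \<Prod>(prime_factors d)"
    using assms squarefree_factorial_semiring' [of d] by (intro prod.cong) auto
  finally have "ramanujan_sum d x = (\<Prod>p\<in>prime_factors d. ramanujan_sum p x)"
    by (metis ramanujan_sum_prod_primes finite_set_mset in_prime_factors_imp_prime)
  then show ?thesis
    by (simp add: prod_norm [symmetric])
      (intro prod.cong refl, auto dest: in_prime_factors_imp_prime simp: ramanujan_sum_prime)
qed

lemma bij_betw_divisors_multiplicities:
  fixes n :: nat
  assumes "n > 0"
  shows "bij_betw (\<lambda>k. restrict (\<lambda>p. multiplicity p k) (prime_factors n))
           {k. k dvd n} (PiE (prime_factors n) (\<lambda>p. {..multiplicity p n}))"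
proof -
  have divisor: "(\<Prod>p\<in>prime_factors n. p ^ multiplicity p k) = k" if "k dvd n" for k
  proof -
    have "k > 0" "prime_factors k \<subseteq> prime_factors n"
      using that assms by (auto intro: dvd_trans Nat.gr0I simp: in_prime_factors_iff)
    then have "(\<Prod>p\<in>prime_factors n. p ^ multiplicity p k)
        = (\<Prod>p\<in>prime_factors k. p ^ multiplicity p k)"
      by (intro prod.mono_neutral_right finite_set_mset) (auto simp: prime_factors_multiplicity)
    with \<open>k > 0\<close> show ?thesis
      by (simp add: prime_factorization_nat [symmetric])
  qed
  have exponents: "multiplicity q (\<Prod>p\<in>prime_factors n. p ^ e p) = e q"
    if "q \<in> prime_factors n" for e q
    using that by (subst multiplicity_prod_prime_powers) (auto dest: in_prime_factors_imp_prime)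
  have dvd: "(\<Prod>p\<in>prime_factors n. p ^ e p) dvd n"
    if "e \<in> PiE (prime_factors n) (\<lambda>p. {..multiplicity p n})" for e
  proof -
    have "(\<Prod>p\<in>prime_factors n. p ^ e p) dvd (\<Prod>p\<in>prime_factors n. p ^ multiplicity p n)"
      using that by (intro prod_dvd_prod le_imp_power_dvd) (auto simp: PiE_iff)
    with assms show ?thesis
      by (simp add: prime_factorization_nat [symmetric])
  qed
  show ?thesis
  proof (rule bij_betw_byWitness [where f' = "\<lambda>e. \<Prod>p\<in>prime_factors n. p ^ e p"])
    show "(\<lambda>k. restrict (\<lambda>p. multiplicity p k) (prime_factors n)) ` {k. k dvd n}
        \<subseteq> PiE (prime_factors n) (\<lambda>p. {..multiplicity p n})"
      using assms by (auto intro: dvd_imp_multiplicity_le)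
    show "\<forall>k\<in>{k. k dvd n}.
        (\<Prod>p\<in>prime_factors n. p ^ restrict (\<lambda>p. multiplicity p k) (prime_factors n) p) = k"
      using divisor by (simp cong: prod.cong)
    show "\<forall>e\<in>PiE (prime_factors n) (\<lambda>p. {..multiplicity p n}).
        restrict (\<lambda>p. multiplicity p (\<Prod>p\<in>prime_factors n. p ^ e p)) (prime_factors n) = e"
    proof
      fix e
      assume "e \<in> PiE (prime_factors n) (\<lambda>p. {..multiplicity p n})"
      then show "restrict (\<lambda>p. multiplicity p (\<Prod>p\<in>prime_factors n. p ^ e p)) (prime_factors n) = e"
        by (intro PiE_ext [of _ "prime_factors n" "\<lambda>_. UNIV"]) (auto simp: exponents)
    qed
  qed (use dvd in blast)
qed

lemma sum_divisors_prod_multiplicity: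
  fixes g :: "nat \<Rightarrow> nat \<Rightarrow> 'a :: comm_semiring_1"
  assumes "n > 0"
  shows "(\<Sum>k | k dvd n. \<Prod>p\<in>prime_factors n. g p (multiplicity p k))
       = (\<Prod>p\<in>prime_factors n. \<Sum>a\<le>multiplicity p n. g p a)"
proof -
  have "(\<Sum>k | k dvd n. \<Prod>p\<in>prime_factors n. g p (multiplicity p k))
      = (\<Sum>e\<in>PiE (prime_factors n) (\<lambda>p. {..multiplicity p n}). \<Prod>p\<in>prime_factors n. g p (e p))"
    using sum.reindex_bij_betw [OF bij_betw_divisors_multiplicities [OF assms],
        of "\<lambda>e. \<Prod>p\<in>prime_factors n. g p (e p)"]
    by (simp cong: prod.cong)
  also have "\<dots> = (\<Prod>p\<in>prime_factors n. \<Sum>a\<le>multiplicity p n. g p a)"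
    by (rule prod_sum_PiE [symmetric]) auto
  finally show ?thesis .
qed

lemma powr_of_real_prod:
  assumes "finite A" "\<And>i. i \<in> A \<Longrightarrow> x i \<ge> 0"
  shows "complex_of_real (\<Prod>i\<in>A. x i) powr z = (\<Prod>i\<in>A. complex_of_real (x i) powr z)"
  using assms
proof (induction A rule: finite_induct)
  case (insert a A)
  have "complex_of_real (x a * (\<Prod>i\<in>A. x i)) powr z
      = complex_of_real (x a) powr z * complex_of_real (\<Prod>i\<in>A. x i) powr z"
    using insert by (simp only: of_real_mult) (intro powr_times_real, auto intro: prod_nonneg simp del: of_real_prod)
  then show ?case
    using insert by (simp del: of_real_prod)
qed (simp add: powr_def)

lemma powr_of_real_power:
  assumes "x > 0"
  shows "complex_of_real (x ^ m) powr z = complex_of_real x powr (of_nat m * z)"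
  using assms by (simp add: powr_def Ln_of_real ln_realpow algebra_simps del: of_real_power)

lemma norm_ramanujan_sum_squarefree_divisor:
  assumes "squarefree d" "d dvd n" "n > 0"
  shows "norm (ramanujan_sum d x)
       = (\<Prod>p\<in>prime_factors n. if int p dvd x then real (p - 1) ^ multiplicity p d else 1)"
proof -
  have "d > 0"
    using assms by (auto intro: Nat.gr0I)
  have "prime_factors d \<subseteq> prime_factors n"
    using assms \<open>d > 0\<close> by (auto simp: in_prime_factors_iff intro: dvd_trans)
  moreover have "multiplicity p d = 1" if "p \<in> prime_factors d" for p
    using that assms(1) \<open>d > 0\<close> squarefree_factorial_semiring'' [of d]
    by (auto simp: prime_factors_multiplicity le_Suc_eq)
  moreover have "multiplicity p d = 0" if "p \<in> prime_factors n - prime_factors d" for p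
    using that \<open>d > 0\<close> by (auto simp: prime_factors_multiplicity)
  ultimately show ?thesis
    unfolding norm_ramanujan_sum_squarefree [OF assms(1) \<open>d > 0\<close>]
    by (intro prod.mono_neutral_cong_left) auto
qed

lemma inverse_powr_norm_ramanujan_sum:
  assumes "squarefree d" "d dvd n" "n > 0" "k dvd n"
  shows "1 / complex_of_real (norm (ramanujan_sum d (int k))) powr z
       = (\<Prod>p\<in>prime_factors n. if multiplicity p k = 0 then 1
            else 1 / complex_of_real (real (p - 1)) powr (of_nat (multiplicity p d) * z))"
proof -
  have "k \<noteq> 0"
    using assms by auto
  have "1 / complex_of_real (norm (ramanujan_sum d (int k))) powr z
      = (\<Prod>p\<in>prime_factors n.
           1 / complex_of_real (if p dvd k then real (p - 1) ^ multiplicity p d else 1) powr z)"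
    unfolding norm_ramanujan_sum_squarefree_divisor [OF assms(1-3)]
    by (subst powr_of_real_prod) (auto simp: prod_dividef simp del: of_real_prod)
  also have "\<dots> = (\<Prod>p\<in>prime_factors n. if multiplicity p k = 0 then 1
            else 1 / complex_of_real (real (p - 1)) powr (of_nat (multiplicity p d) * z))"
  proof (intro prod.cong refl)
    fix p
    assume "p \<in> prime_factors n"
    then have "prime p"
      by auto
    then have "real (p - 1) > 0" "p dvd k \<longleftrightarrow> multiplicity p k \<noteq> 0"
      using \<open>k \<noteq> 0\<close> prime_gt_1_nat [of p] by (auto simp: prime_multiplicity_gt_zero_iff)
    then show "1 / complex_of_real (if p dvd k then real (p - 1) ^ multiplicity p d else 1) powr z
        = (if multiplicity p k = 0 then 1
           else 1 / complex_of_real (real (p - 1)) powr (of_nat (multiplicity p d) * z))"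
      by (simp add: powr_of_real_power del: of_real_power)
  qed
  finally show ?thesis .
qed

theorem mainTheorem10:
  fixes n d :: nat and z :: complex
  assumes "n \<ge> 1" and "d dvd n" and "squarefree d"
  shows "(\<Sum>k | k dvd n. 1 / (complex_of_real (norm (ramanujan_sum d (int k)))) powr z)
       = (\<Prod>p\<in>prime_factors n.
            1 + of_nat (multiplicity p n)
                / (complex_of_real (real (p - 1))) powr (of_nat (multiplicity p d) * z))"
proof -
  define c where "c p = 1 / complex_of_real (real (p - 1)) powr (of_nat (multiplicity p d) * z)" for p
  have "n > 0"
    using assms(1) by simp
  have "(\<Sum>k | k dvd n. 1 / (complex_of_real (norm (ramanujan_sum d (int k)))) powr z)
      = (\<Sum>k | k dvd n. \<Prod>p\<in>prime_factors n. if multiplicity p k = 0 then 1 else c p)"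
    unfolding c_def using assms \<open>n > 0\<close>
    by (intro sum.cong refl) (simp add: inverse_powr_norm_ramanujan_sum)
  also have "\<dots> = (\<Prod>p\<in>prime_factors n. \<Sum>a\<le>multiplicity p n. if a = 0 then 1 else c p)"
    using sum_divisors_prod_multiplicity [OF \<open>n > 0\<close>] .
  also have "\<dots> = (\<Prod>p\<in>prime_factors n. 1 + of_nat (multiplicity p n) * c p)"
    by (simp add: sum.atMost_shift)
  finally show ?thesis
    by (simp add: c_def)
qed

end
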